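(* There is a duality (contravariant self-equivalence) on the category of finite-dimensional right $B'$-comodules which on string comodules is given by interchanging the letters $a_i$ and $b_i^{-1}$ for all $i$ in the string. In particular it interchanges $M(t,s)$ and $M'(t,s)$, and interchanges $N(t,s)$ and $N'(t,s)$.
   Context: $k$ is a field. $Q$ is the quiver with vertices $0,1,2,\dots$ and arrows $a_i:i\to i+1$, $b_i:i+1\to i$ ($i\ge0$); $kQ$ is its path coalgebra with vertices as group-likes $g_i$ and arrows $\alpha:h\to g$ skew-primitive ($\Delta\alpha=g\otimes\alpha+\alpha\otimes h$). $B'\subseteq kQ$ is the subcoalgebra spanned by the $g_i,a_i,b_i$ (the string coalgebra associated with the basic coalgebra of a nontrivial block of $k_\zeta[SL(2)]$ at an odd root of unity in characteristic zero). A finite-dimensional representation $V=\bigoplus_iV_i$ of $Q$ in which every composite of two arrows is zero is a right $B'$-comodule via $\rho(v)=v\otimes g_i+\sum_{\alpha:\,s(\alpha)=i}\alpha(v)\otimes\alpha$ for $v\in V_i$. For $0\le s<t$ and a word $w=w_{t-1}\cdots w_s$ with each $w_j\in\{a_j,b_j^{-1}\}$ and consecutive letters alternating in type, the string comodule $\mathrm{St}(w)$ has basis $v_s,\dots,v_t$ with $v_j\in V_j$, $a_j(v_j)=v_{j+1}$ if $w_j=a_j$, $b_j(v_{j+1})=v_j$ if $w_j=b_j^{-1}$, other arrow actions on basis vectors zero. $M(t,s)=\mathrm{St}(a_{t-1}b_{t-2}^{-1}\cdots a_{s+1}b_s^{-1})$, $M'(t,s)=\mathrm{St}(b_{t-1}^{-1}a_{t-2}\cdots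 b_{s+1}^{-1}a_s)$ ($t-s$ even), $N(t,s)=\mathrm{St}(a_{t-1}b_{t-2}^{-1}\cdots b_{s+1}^{-1}a_s)$, $N'(t,s)=\mathrm{St}(b_{t-1}^{-1}a_{t-2}\cdots a_{s+1}b_s^{-1})$ ($t-s$ odd), and $M(i,i)=M'(i,i)=kg_i$. *)

theory Defs
  imports "Jordan_Normal_Form.Matrix"
begin

text \<open>Basis of the coalgebra B': group-likes g_i, arrows a_i : i -> i+1 and b_i : i+1 -> i.\<close>
datatype coel = G nat | A nat | Bb nat

text \<open>Comultiplication on the basis, as a list of pairs (d,c) meaning d tensor c.
  For an arrow alpha : h -> g we have Delta alpha = g tensor alpha + alpha tensor h.\<close>
fun Delta :: "coel \<Rightarrow> (coel \<times> coel) list" where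
  "Delta (G i) = [(G i, G i)]"
| "Delta (A i) = [(G (Suc i), A i), (A i, G i)]"
| "Delta (Bb i) = [(G i, Bb i), (Bb i, G (Suc i))]"

fun eps :: "coel \<Rightarrow> 'k::field" where
  "eps (G i) = 1"
| "eps (A i) = 0"
| "eps (Bb i) = 0"

text \<open>A finite-dimensional right B'-comodule: V = k^n (column vectors) and
  rho(v) = sum_c (rho c) v tensor c, with rho c an n x n matrix.\<close>
type_synonym 'k comod = "nat \<times> (coel \<Rightarrow> 'k mat)"

definition is_comod :: "'k::field comod \<Rightarrow> bool" where
  "is_comod X \<longleftrightarrow> (let n = fst X; rho = snd X in
     (\<forall>c. rho c \<in> carrier_mat n n)
   \<and> finite {c. rho c \<noteq> 0\<^sub>m n n}
   \<and> (\<forall>d c. rho d * rho c =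
          mat n n (\<lambda>(i,j). \<Sum>e\<in>{e. (d,c) \<in> set (Delta e)}.
                    of_nat (count_list (Delta e) (d,c)) * (rho e $$ (i,j))))
   \<and> 1\<^sub>m n = mat n n (\<lambda>(i,j). \<Sum>e\<in>{c. rho c \<noteq> 0\<^sub>m n n}. eps e * (rho e $$ (i,j))))"

definition comod_hom :: "'k::field comod \<Rightarrow> 'k comod \<Rightarrow> 'k mat \<Rightarrow> bool" where
  "comod_hom X Y f \<longleftrightarrow> is_comod X \<and> is_comod Y \<and> f \<in> carrier_mat (fst Y) (fst X)
     \<and> (\<forall>c. f * snd X c = snd Y c * f)"

definition comod_iso :: "'k::field comod \<Rightarrow> 'k comod \<Rightarrow> bool" where
  "comod_iso X Y \<longleftrightarrow> (\<exists>f g. comod_hom X Y f \<and> comod_hom Y X g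
     \<and> g * f = 1\<^sub>m (fst X) \<and> f * g = 1\<^sub>m (fst Y))"

definition is_duality ::
  "('k::field comod \<Rightarrow> 'k comod) \<Rightarrow> ('k comod \<Rightarrow> 'k comod \<Rightarrow> 'k mat \<Rightarrow> 'k mat) \<Rightarrow> bool" where
  "is_duality D Dm \<longleftrightarrow>
     (\<forall>X. is_comod X \<longrightarrow> is_comod (D X))
   \<and> (\<forall>X Y f. comod_hom X Y f \<longrightarrow> comod_hom (D Y) (D X) (Dm X Y f))
   \<and> (\<forall>X Y Z f g. comod_hom X Y f \<longrightarrow> comod_hom Y Z g \<longrightarrow>
         Dm X Z (g * f) = Dm X Y f * Dm Y Z g)
   \<and> (\<forall>X. is_comod X \<longrightarrow> Dm X X (1\<^sub>m (fst X)) = 1\<^sub>m (fst (D X)))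
   \<and> (\<forall>X Y f g. comod_hom X Y f \<longrightarrow> comod_hom X Y g \<longrightarrow> Dm X Y (f + g) = Dm X Y f + Dm X Y g)
   \<and> (\<forall>X Y f a. comod_hom X Y f \<longrightarrow> Dm X Y (a \<cdot>\<^sub>m f) = a \<cdot>\<^sub>m Dm X Y f)
   \<and> (\<forall>X Y. is_comod X \<longrightarrow> is_comod Y \<longrightarrow>
         bij_betw (Dm X Y) {f. comod_hom X Y f} {h. comod_hom (D Y) (D X) h})
   \<and> (\<forall>Z. is_comod Z \<longrightarrow> (\<exists>X. is_comod X \<and> comod_iso Z (D X)))"

text \<open>Words: a word w_{t-1}...w_s is encoded by its start s and the list
  [w_s, w_{s+1}, ..., w_{t-1}] where True means a_j and False means b_j^{-1};
  consecutive letters alternate in type.\<close>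
definition valid_word :: "bool list \<Rightarrow> bool" where
  "valid_word ws \<longleftrightarrow> ws \<noteq> [] \<and> (\<forall>k. Suc k < length ws \<longrightarrow> ws ! Suc k \<noteq> ws ! k)"

text \<open>String comodule St(w): basis v_s..v_t (v_{s+k} is the k-th standard basis vector),
  n = t - s + 1; rho_{g_i} is the projection onto V_i, rho_{a_j} sends v_j to v_{j+1}
  if w_j = a_j, rho_{b_j} sends v_{j+1} to v_j if w_j = b_j^{-1}.\<close>
definition St :: "nat \<Rightarrow> bool list \<Rightarrow> 'k::field comod" where
  "St s ws = (let n = Suc (length ws) in (n, (\<lambda>c. case c of
      G i \<Rightarrow> mat n n (\<lambda>(r,q). if r = q \<and> s + r = i then 1 else 0)
    | A j \<Rightarrow> mat n n (\<lambda>(r,q). if s \<le> j \<and> q = j - s \<and> r = Suc q \<and> q < length ws \<and> ws ! q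
                               then 1 else 0)
    | Bb j \<Rightarrow> mat n n (\<lambda>(r,q). if s \<le> j \<and> r = j - s \<and> q = Suc r \<and> r < length ws \<and> \<not> ws ! r
                               then 1 else 0))))"

definition swap_word :: "bool list \<Rightarrow> bool list" where
  "swap_word ws = map Not ws"

text \<open>The words of M(t,s), M'(t,s) (t - s even) and N(t,s), N'(t,s) (t - s odd),
  listed from w_s up to w_{t-1}.\<close>
definition wM :: "nat \<Rightarrow> nat \<Rightarrow> bool list" where "wM t s = map odd [0..<t-s]"
definition wM' :: "nat \<Rightarrow> nat \<Rightarrow> bool list" where "wM' t s = map even [0..<t-s]"
definition wN :: "nat \<Rightarrow> nat \<Rightarrow> bool list" where "wN t s = map even [0..<t-s]"
definition wN' :: "nat \<Rightarrow> nat \<Rightarrow> bool list" where "wN' t s = map odd [0..<t-s]"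

definition Mc :: "nat \<Rightarrow> nat \<Rightarrow> 'k::field comod" where "Mc t s = St s (wM t s)"
definition Mc' :: "nat \<Rightarrow> nat \<Rightarrow> 'k::field comod" where "Mc' t s = St s (wM' t s)"
definition Nc :: "nat \<Rightarrow> nat \<Rightarrow> 'k::field comod" where "Nc t s = St s (wN t s)"
definition Nc' :: "nat \<Rightarrow> nat \<Rightarrow> 'k::field comod" where "Nc' t s = St s (wN' t s)"

end

theory Submission
  imports Defs
begin

text \<open>The map exchanging \<open>a\<^sub>i\<close> and \<open>b\<^sub>i\<close> and fixing the \<open>g\<^sub>i\<close> is an
  anti-automorphism of the coalgebra \<open>B'\<close>: it reverses the two tensor factors of
  every comultiplication. The linear dual of a right comodule is a left comodule, and twisting
  it by this anti-automorphism makes it a right comodule again; in matrix terms the coaction of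
  \<open>c\<close> on the dual is the transpose of the coaction of the swapped element, and morphisms
  are transposed. This is an involution on objects, so it is a duality. On a string comodule
  the transpose of the matrix of \<open>a\<^sub>j\<close> is the matrix of \<open>b\<^sub>j\<close> of the string with
  the letters interchanged, so the dual of \<open>St(w)\<close> is literally \<open>St\<close> of the swapped word.\<close>

fun swap_coel :: "coel \<Rightarrow> coel" where
  "swap_coel (G i) = G i"
| "swap_coel (A i) = Bb i"
| "swap_coel (Bb i) = A i"

lemma swap_coel_swap_coel [simp]: "swap_coel (swap_coel c) = c"
  by (cases c) auto

lemma inj_swap_coel: "inj swap_coel"
  by (metis injI swap_coel_swap_coel)

lemma Collect_swap_coel: "{c. P (swap_coel c)} = swap_coel ` {c. P c}"
  by (auto simp: image_iff) (metis swap_coel_swap_coel)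

lemma eps_swap_coel [simp]: "eps (swap_coel c) = eps c"
  by (cases c) auto

lemma Delta_swap_coel:
  "Delta (swap_coel e) = rev (map (\<lambda>(d, c). (swap_coel c, swap_coel d)) (Delta e))"
  by (cases e) auto

lemma count_list_Delta_swap_coel:
  "count_list (Delta (swap_coel e)) (d, c) = count_list (Delta e) (swap_coel c, swap_coel d)"
proof -
  let ?flip = "\<lambda>(d, c). (swap_coel c, swap_coel d)"
  have "inj ?flip" by (rule injI) (auto dest: injD[OF inj_swap_coel])
  moreover have "(d, c) = ?flip (swap_coel c, swap_coel d)" by simp
  ultimately show ?thesis
    unfolding Delta_swap_coel count_list_rev by (metis count_list_map_conv)
qed

lemma mem_Delta_swap_coel:
  "(d, c) \<in> set (Delta (swap_coel e)) \<longleftrightarrow> (swap_coel c, swap_coel d) \<in> set (Delta e)"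
  by (force simp: Delta_swap_coel)

definition comult_coeff :: "(coel \<Rightarrow> 'k::field) \<Rightarrow> coel \<Rightarrow> coel \<Rightarrow> 'k" where
  "comult_coeff x d c =
     (\<Sum>e | (d, c) \<in> set (Delta e). of_nat (count_list (Delta e) (d, c)) * x e)"

lemma comult_coeff_swap_coel:
  "comult_coeff (\<lambda>e. x (swap_coel e)) d c = comult_coeff x (swap_coel c) (swap_coel d)"
  unfolding comult_coeff_def
  by (rule sum.reindex_bij_witness[of _ swap_coel swap_coel])
     (auto simp: count_list_Delta_swap_coel mem_Delta_swap_coel)

fun source :: "coel \<Rightarrow> nat" where
  "source (G m) = m" | "source (A i) = i" | "source (Bb i) = Suc i"

fun target :: "coel \<Rightarrow> nat" where
  "target (G m) = m" | "target (A i) = Suc i" | "target (Bb i) = i"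

lemma mem_Delta_iff:
  "(d, c) \<in> set (Delta e) \<longleftrightarrow> (d = G (target e) \<and> c = e) \<or> (d = e \<and> c = G (source e))"
  by (cases e) auto

lemma comult_coeff_simps [simp]:
  "comult_coeff x (G m) (G m') = (if m = m' then x (G m) else 0)"
  "comult_coeff x (G m) (A i) = (if m = Suc i then x (A i) else 0)"
  "comult_coeff x (G m) (Bb i) = (if m = i then x (Bb i) else 0)"
  "comult_coeff x (A i) (G m) = (if m = i then x (A i) else 0)"
  "comult_coeff x (Bb i) (G m) = (if m = Suc i then x (Bb i) else 0)"
  "comult_coeff x (A i) (A j) = 0"
  "comult_coeff x (A i) (Bb j) = 0"
  "comult_coeff x (Bb i) (A j) = 0"
  "comult_coeff x (Bb i) (Bb j) = 0"
proof -
  have "{e. (G m, G m') \<in> set (Delta e)} = (if m = m' then {G m} else {})"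
    by (auto simp: mem_Delta_iff)
  then show "comult_coeff x (G m) (G m') = (if m = m' then x (G m) else 0)"
    by (simp add: comult_coeff_def)
qed (simp_all add: comult_coeff_def mem_Delta_iff Collect_conv_if Collect_conv_if2)

lemma is_comod_iff:
  "is_comod (n, \<rho>) \<longleftrightarrow>
     (\<forall>c. \<rho> c \<in> carrier_mat n n) \<and> finite {c. \<rho> c \<noteq> 0\<^sub>m n n}
   \<and> (\<forall>d c. \<forall>i<n. \<forall>j<n. (\<rho> d * \<rho> c) $$ (i, j) = comult_coeff (\<lambda>e. \<rho> e $$ (i, j)) d c)
   \<and> (\<forall>i<n. \<forall>j<n. (\<Sum>e | \<rho> e \<noteq> 0\<^sub>m n n. eps e * \<rho> e $$ (i, j)) = (if i = j then 1 else 0))"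
  (is "_ \<longleftrightarrow> ?carrier \<and> ?finite \<and> ?comult \<and> ?counit")
proof -
  have mat_eq_iff_index: "A = B \<longleftrightarrow> (\<forall>i<n. \<forall>j<n. A $$ (i, j) = B $$ (i, j))"
    if "A \<in> carrier_mat n n" "B \<in> carrier_mat n n" for A B :: "'a mat"
    using that by (auto simp: mat_eq_iff)
  have "(\<forall>d c. \<rho> d * \<rho> c = mat n n (\<lambda>(i, j). comult_coeff (\<lambda>e. \<rho> e $$ (i, j)) d c)) \<longleftrightarrow> ?comult"
    and "1\<^sub>m n = mat n n (\<lambda>(i, j). \<Sum>e | \<rho> e \<noteq> 0\<^sub>m n n. eps e * \<rho> e $$ (i, j)) \<longleftrightarrow> ?counit"
    if ?carrier
  proof -
    have "\<rho> d * \<rho> c \<in> carrier_mat n n" for d c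
      using that by (metis mult_carrier_mat)
    then show "(\<forall>d c. \<rho> d * \<rho> c = mat n n (\<lambda>(i, j). comult_coeff (\<lambda>e. \<rho> e $$ (i, j)) d c)) \<longleftrightarrow> ?comult"
      by (simp add: mat_eq_iff_index)
    show "1\<^sub>m n = mat n n (\<lambda>(i, j). \<Sum>e | \<rho> e \<noteq> 0\<^sub>m n n. eps e * \<rho> e $$ (i, j)) \<longleftrightarrow> ?counit"
      by (auto simp: mat_eq_iff_index)
  qed
  then show ?thesis
    unfolding is_comod_def Let_def comult_coeff_def fst_conv snd_conv by blast
qed

definition dual_comod :: "'k::field comod \<Rightarrow> 'k comod" where
  "dual_comod X = (fst X, \<lambda>c. (snd X (swap_coel c))\<^sup>T)"

lemma is_comod_dual_comod:
  assumes "is_comod X"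
  shows "is_comod (dual_comod X)"
proof -
  obtain n \<rho> where X_eq: "X = (n, \<rho>)" by fastforce
  have carrier: "\<And>c. \<rho> c \<in> carrier_mat n n"
    and finite: "finite {c. \<rho> c \<noteq> 0\<^sub>m n n}"
    and comult: "\<And>d c i j. i < n \<Longrightarrow> j < n \<Longrightarrow>
                   (\<rho> d * \<rho> c) $$ (i, j) = comult_coeff (\<lambda>e. \<rho> e $$ (i, j)) d c"
    and counit: "\<And>i j. i < n \<Longrightarrow> j < n \<Longrightarrow>
                   (\<Sum>e | \<rho> e \<noteq> 0\<^sub>m n n. eps e * \<rho> e $$ (i, j)) = (if i = j then 1 else 0)"
    using assms unfolding X_eq is_comod_iff by auto
  have "(\<rho> (swap_coel c))\<^sup>T \<noteq> 0\<^sub>m n n \<longleftrightarrow> \<rho> (swap_coel c) \<noteq> 0\<^sub>m n n" for c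
    by (metis transpose_mat_eq zero_transpose_mat)
  then have support: "{c. (\<rho> (swap_coel c))\<^sup>T \<noteq> 0\<^sub>m n n} = swap_coel ` {c. \<rho> c \<noteq> 0\<^sub>m n n}"
    using Collect_swap_coel[of "\<lambda>c. \<rho> c \<noteq> 0\<^sub>m n n"] by simp
  have dual_comult: "((\<rho> (swap_coel d))\<^sup>T * (\<rho> (swap_coel c))\<^sup>T) $$ (i, j)
          = comult_coeff (\<lambda>e. (\<rho> (swap_coel e))\<^sup>T $$ (i, j)) d c"
    if "i < n" "j < n" for d c i j
  proof -
    have "((\<rho> (swap_coel d))\<^sup>T * (\<rho> (swap_coel c))\<^sup>T) $$ (i, j)
            = (\<rho> (swap_coel c) * \<rho> (swap_coel d)) $$ (j, i)"
      using that carrier_matD[OF carrier] by (simp flip: transpose_mult[OF carrier carrier])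
    also have "\<dots> = comult_coeff (\<lambda>e. \<rho> e $$ (j, i)) (swap_coel c) (swap_coel d)"
      by (rule comult[OF that(2,1)])
    also have "\<dots> = comult_coeff (\<lambda>e. \<rho> (swap_coel e) $$ (j, i)) d c"
      by (rule comult_coeff_swap_coel[symmetric])
    finally show ?thesis
      using that carrier_matD[OF carrier] by simp
  qed
  have dual_counit: "(\<Sum>e | (\<rho> (swap_coel e))\<^sup>T \<noteq> 0\<^sub>m n n. eps e * (\<rho> (swap_coel e))\<^sup>T $$ (i, j))
                   = (if i = j then 1 else 0)"
    if "i < n" "j < n" for i j
  proof -
    have "(\<Sum>e | (\<rho> (swap_coel e))\<^sup>T \<noteq> 0\<^sub>m n n. eps e * (\<rho> (swap_coel e))\<^sup>T $$ (i, j))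
            = (\<Sum>e | \<rho> e \<noteq> 0\<^sub>m n n. eps e * \<rho> e $$ (j, i))"
      unfolding support using that carrier_matD[OF carrier]
      by (simp add: sum.reindex[OF inj_on_subset[OF inj_swap_coel]])
    also have "\<dots> = (if i = j then 1 else 0)"
      using that by (simp add: counit eq_commute)
    finally show ?thesis .
  qed
  show ?thesis
    unfolding X_eq dual_comod_def is_comod_iff fst_conv snd_conv
    using finite by (simp add: carrier support dual_comult dual_counit[unfolded support])
qed

lemma dual_comod_dual_comod [simp]: "dual_comod (dual_comod X) = X"
  by (simp add: dual_comod_def)

lemma comod_carrier: "is_comod X \<Longrightarrow> snd X c \<in> carrier_mat (fst X) (fst X)"
  by (simp add: is_comod_def Let_def)

lemma comod_hom_carrier: "comod_hom X Y f \<Longrightarrow> f \<in> carrier_mat (fst Y) (fst X)"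
  by (simp add: comod_hom_def)

lemma comod_hom_transpose:
  assumes "comod_hom X Y f"
  shows "comod_hom (dual_comod Y) (dual_comod X) f\<^sup>T"
proof -
  have X: "is_comod X" and Y: "is_comod Y" and f: "f \<in> carrier_mat (fst Y) (fst X)"
    and commute: "\<And>c. f * snd X c = snd Y c * f"
    using assms by (auto simp: comod_hom_def)
  have "f\<^sup>T * (snd Y (swap_coel c))\<^sup>T = (snd X (swap_coel c))\<^sup>T * f\<^sup>T" for c
    using commute[of "swap_coel c"]
    by (simp flip: transpose_mult[OF comod_carrier[OF Y] f] transpose_mult[OF f comod_carrier[OF X]])
  then show ?thesis
    using is_comod_dual_comod[OF X] is_comod_dual_comod[OF Y] f
    by (simp add: comod_hom_def dual_comod_def)
qed

lemma comod_hom_one: "is_comod X \<Longrightarrow> comod_hom X X (1\<^sub>m (fst X))"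
  by (simp add: comod_hom_def left_mult_one_mat[OF comod_carrier] right_mult_one_mat[OF comod_carrier])

lemma comod_iso_refl: "is_comod X \<Longrightarrow> comod_iso X X"
  unfolding comod_iso_def by (metis comod_hom_one left_mult_one_mat one_carrier_mat)

lemma is_duality_dual_comod:
  "is_duality (dual_comod :: 'k::field comod \<Rightarrow> 'k comod) (\<lambda>X Y f. f\<^sup>T)"
  unfolding is_duality_def
proof (intro conjI allI impI)
  fix X Y Z :: "'k comod" and f g :: "'k mat" and a :: 'k
  show "is_comod X \<Longrightarrow> is_comod (dual_comod X)"
    by (rule is_comod_dual_comod)
  show "comod_hom X Y f \<Longrightarrow> comod_hom (dual_comod Y) (dual_comod X) f\<^sup>T"
    by (rule comod_hom_transpose)
  show "(g * f)\<^sup>T = f\<^sup>T * g\<^sup>T" if "comod_hom X Y f" "comod_hom Y Z g"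
    using comod_hom_carrier[OF that(2)] comod_hom_carrier[OF that(1)] by (rule transpose_mult)
  show "(1\<^sub>m (fst X))\<^sup>T = 1\<^sub>m (fst (dual_comod X))"
    by (simp add: dual_comod_def)
  show "(f + g)\<^sup>T = f\<^sup>T + g\<^sup>T" if "comod_hom X Y f" "comod_hom X Y g"
    using comod_hom_carrier[OF that(1)] comod_hom_carrier[OF that(2)] by (rule transpose_add)
  show "(a \<cdot>\<^sub>m f)\<^sup>T = a \<cdot>\<^sub>m f\<^sup>T"
    by (rule eq_matI) auto
  show "bij_betw transpose_mat {f. comod_hom X Y f} {h. comod_hom (dual_comod Y) (dual_comod X) h}"
    by (rule bij_betwI[where g = transpose_mat])
       (auto dest: comod_hom_transpose[of X Y] comod_hom_transpose[of "dual_comod Y" "dual_comod X"])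
  show "\<exists>X'. is_comod X' \<and> comod_iso X (dual_comod X')" if "is_comod X"
    using that is_comod_dual_comod comod_iso_refl by fastforce
qed

definition string_entry :: "nat \<Rightarrow> bool list \<Rightarrow> coel \<Rightarrow> nat \<Rightarrow> nat \<Rightarrow> 'k::field" where
  "string_entry s ws c r q = (case c of
      G i \<Rightarrow> if r = q \<and> s + r = i then 1 else 0
    | A j \<Rightarrow> if s \<le> j \<and> q = j - s \<and> r = Suc q \<and> q < length ws \<and> ws ! q then 1 else 0
    | Bb j \<Rightarrow> if s \<le> j \<and> r = j - s \<and> q = Suc r \<and> r < length ws \<and> \<not> ws ! r then 1 else 0)"

lemma St_eq:
  "St s ws = (Suc (length ws),
     \<lambda>c. mat (Suc (length ws)) (Suc (length ws)) (\<lambda>(r, q). string_entry s ws c r q))"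
  unfolding St_def string_entry_def Let_def by (intro prod_eqI ext) (auto split: coel.splits)

lemma dual_comod_St: "dual_comod (St s ws) = St s (swap_word ws)"
  unfolding St_eq dual_comod_def swap_word_def
  by (intro prod_eqI ext eq_matI) (auto simp: string_entry_def split: coel.splits)

fun string_col :: "nat \<Rightarrow> coel \<Rightarrow> nat \<Rightarrow> nat" where
  "string_col s (G m) r = r"
| "string_col s (A j) r = j - s"
| "string_col s (Bb j) r = Suc r"

lemma string_entry_eq_0: "q \<noteq> string_col s c r \<Longrightarrow> string_entry s ws c r q = 0"
  by (cases c) (auto simp: string_entry_def)

lemma string_entry_mult:
  assumes "valid_word ws" and "i < Suc (length ws)" and "j < Suc (length ws)"
  shows "(\<Sum>k<Suc (length ws). string_entry s ws d i k * string_entry s ws c k j)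
           = (comult_coeff (\<lambda>e. string_entry s ws e i j) d c :: 'k::field)"
proof -
  have alternating: "\<And>k. Suc k < length ws \<Longrightarrow> ws ! Suc k \<noteq> ws ! k"
    using assms(1) by (simp add: valid_word_def)
  let ?k = "string_col s d i"
  have "(\<Sum>k<Suc (length ws). string_entry s ws d i k * string_entry s ws c k j)
          = (\<Sum>k<Suc (length ws). if k = ?k
               then string_entry s ws d i ?k * (string_entry s ws c ?k j :: 'k) else 0)"
    by (intro sum.cong) (auto simp: string_entry_eq_0)
  also have "\<dots> = (if ?k < Suc (length ws)
                     then string_entry s ws d i ?k * string_entry s ws c ?k j else 0)"
    by simp
  also have "\<dots> = comult_coeff (\<lambda>e. string_entry s ws e i j) d c"
    using assms(2,3) alternating
    by (cases d; cases c) (auto simp: string_entry_def)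
  finally show ?thesis .
qed

lemma is_comod_St:
  assumes "valid_word ws"
  shows "is_comod (St s ws :: 'k::field comod)"
proof -
  define n where "n = Suc (length ws)"
  define \<rho> where "\<rho> c = (mat n n (\<lambda>(r, q). string_entry s ws c r q) :: 'k mat)" for c
  have St_pair: "St s ws = (n, \<rho>)"
    unfolding St_eq n_def \<rho>_def ..
  have support: "{c. \<rho> c \<noteq> 0\<^sub>m n n} \<subseteq> (\<Union>m\<le>s + n. {G m, A m, Bb m})"
  proof
    fix c assume "c \<in> {c. \<rho> c \<noteq> 0\<^sub>m n n}"
    then obtain i j where "i < n" "j < n" "string_entry s ws c i j \<noteq> (0 :: 'k)"
      by (auto simp: \<rho>_def mat_eq_iff)
    then show "c \<in> (\<Union>m\<le>s + n. {G m, A m, Bb m})"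
      by (cases c) (auto simp: string_entry_def split: if_splits)
  qed
  have counit: "(\<Sum>e | \<rho> e \<noteq> 0\<^sub>m n n. eps e * \<rho> e $$ (i, j)) = (if i = j then 1 else 0)"
    if "i < n" "j < n" for i j
  proof -
    have "\<rho> (G (s + i)) $$ (i, i) = 1"
      using that by (simp add: \<rho>_def string_entry_def)
    then have "G (s + i) \<in> {c. \<rho> c \<noteq> 0\<^sub>m n n}"
      using that by auto
    moreover have "eps e * \<rho> e $$ (i, j) = (if e = G (s + i) then (if i = j then 1 else 0) else 0)" for e
      using that by (cases e) (auto simp: \<rho>_def string_entry_def)
    ultimately show ?thesis
      using finite_subset[OF support] by simp
  qed
  show ?thesis
    unfolding St_pair is_comod_iff
    using finite_subset[OF support] counit string_entry_mult[OF assms]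
    by (auto simp: \<rho>_def n_def scalar_prod_def lessThan_atLeast0)
qed

lemma valid_word_swap_word: "valid_word ws \<Longrightarrow> valid_word (swap_word ws)"
  by (simp add: valid_word_def swap_word_def)

lemma comod_iso_dual_comod_St:
  "valid_word ws \<Longrightarrow> comod_iso (dual_comod (St s ws)) (St s (swap_word ws) :: 'k::field comod)"
  unfolding dual_comod_St by (intro comod_iso_refl is_comod_St valid_word_swap_word)

lemma valid_word_parity_words:
  "0 < m \<Longrightarrow> valid_word (map odd [0..<m])"
  "0 < m \<Longrightarrow> valid_word (map even [0..<m])"
  by (auto simp: valid_word_def)

lemma swap_word_parity_words:
  "swap_word (map odd [0..<m]) = map even [0..<m]"
  "swap_word (map even [0..<m]) = map odd [0..<m]"
  by (simp_all add: swap_word_def)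

theorem proposition2p3p4:
  "\<exists>(D :: 'k::field comod \<Rightarrow> 'k comod) Dm. is_duality D Dm
     \<and> (\<forall>s ws. valid_word ws \<longrightarrow> comod_iso (D (St s ws)) (St s (swap_word ws)))
     \<and> (\<forall>s t. s < t \<and> even (t - s) \<longrightarrow>
           comod_iso (D (Mc t s)) (Mc' t s) \<and> comod_iso (D (Mc' t s)) (Mc t s))
     \<and> (\<forall>s t. s < t \<and> odd (t - s) \<longrightarrow>
           comod_iso (D (Nc t s)) (Nc' t s) \<and> comod_iso (D (Nc' t s)) (Nc t s))"
proof -
  have parity_words:
    "comod_iso (dual_comod (St s (map odd [0..<t - s]))) (St s (map even [0..<t - s]) :: 'k comod)"
    "comod_iso (dual_comod (St s (map even [0..<t - s]))) (St s (map odd [0..<t - s]) :: 'k comod)"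
    if "s < t" for s t :: nat
    using that comod_iso_dual_comod_St valid_word_parity_words swap_word_parity_words
    by (metis zero_less_diff)+
  show ?thesis
  proof (intro exI conjI allI impI)
    show "is_duality dual_comod (\<lambda>X Y f. f\<^sup>T :: 'k mat)"
      by (rule is_duality_dual_comod)
    show "comod_iso (dual_comod (St s ws)) (St s (swap_word ws) :: 'k comod)"
      if "valid_word ws" for s ws
      using that by (rule comod_iso_dual_comod_St)
  qed (simp_all add: parity_words Mc_def Mc'_def Nc_def Nc'_def wM_def wM'_def wN_def wN'_def)
qed

end
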